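(* For every $n\ge1$ and every $\lambda>0$, $$F_n(\lambda;\mathbf e_2):=\sum_{p\ge0}u_{n,p}(\mathbf e_2)\lambda^p=\lambda^{n/2}\Big[\mathrm{He}_n\Big(\sqrt\lambda+\tfrac{n}{\sqrt\lambda}\Big)-\tfrac{n}{\sqrt\lambda}\,\mathrm{He}_{n-1}\Big(\sqrt\lambda+\tfrac{n}{\sqrt\lambda}\Big)\Big].$$ Equivalently, $u_{n,p}(\mathbf e_2)=\frac{1}{p!}\sum_{q=0}^p\big(-\tfrac12\big)^q\binom{p}{q}\binom{n-1}{p+q-1}n^{n-p-q}(p+q)!$.
   Context: $u_{n,p}(\mathbf e_2)$ is the number of spanning forests of the complete graph $K_n$ on $n$ labeled vertices having exactly $p$ connected components (trees, isolated vertices included). $\mathrm{He}_s$ are the probabilists' Hermite polynomials, defined by $e^{xz-z^2/2}=\sum_{s\ge0}\mathrm{He}_s(x)z^s/s!$. *)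

theory Defs
  imports "HOL-Computational_Algebra.Formal_Power_Series" Complex_Main
begin

definition Kn_edges :: "nat \<Rightarrow> nat set set" where
  "Kn_edges n = {e. \<exists>a b. a < n \<and> b < n \<and> a \<noteq> b \<and> e = {a, b}}"

definition edge_rel :: "nat set set \<Rightarrow> (nat \<times> nat) set" where
  "edge_rel F = {(a, b). {a, b} \<in> F}"

definition is_forest :: "nat set set \<Rightarrow> bool" where
  "is_forest F \<longleftrightarrow> (\<forall>e\<in>F. \<forall>a b. e = {a, b} \<longrightarrow> (a, b) \<notin> (edge_rel (F - {e}))\<^sup>*)"

text \<open>Connected components of the spanning subgraph ({0..<n}, F) (isolated vertices included).\<close>
definition components :: "nat \<Rightarrow> nat set set \<Rightarrow> nat set set" where
  "components n F = {0..<n} // {(a, b). a < n \<and> b < n \<and> (a, b) \<in> (edge_rel F)\<^sup>*}"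

definition u_e2 :: "nat \<Rightarrow> nat \<Rightarrow> nat" where
  "u_e2 n p = card {F. F \<subseteq> Kn_edges n \<and> is_forest F \<and> card (components n F) = p}"

text \<open>Probabilists' Hermite polynomials via the generating function
  exp(x z - z^2/2) = sum_s He_s(x) z^s / s!, as a formal power series in z.\<close>
definition hermiteHe :: "nat \<Rightarrow> real \<Rightarrow> real" where
  "hermiteHe s x = fact s * fps_nth
     (fps_compose (fps_exp 1) (fps_const x * fps_X - fps_const (1/2) * fps_X ^ 2)) s"

end

theory Submission
  imports Defs
begin

text \<open>
  Let \<open>T(z) = \<Sum>\<^sub>k k\<^bsup>k-2\<^esup> z\<^sup>k / k!\<close> be the exponential generating function of
  labelled trees.  The number \<open>u\<^sub>n\<^sub>,\<^sub>p\<close> of spanning forests of \<open>K\<^sub>n\<close> with \<open>p\<close>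
  components is \<open>n!/p! [z\<^sup>n] T\<^sup>p\<close>, so \<open>\<Sum>\<^sub>p u\<^sub>n\<^sub>,\<^sub>p \<lambda>\<^sup>p = n! [z\<^sup>n] exp(\<lambda>T)\<close>.

  Analytic part.  \<open>T = R - R\<^sup>2/2\<close>, where \<open>R = z E(1)\<close> is the rooted tree function and
  \<open>E(x) = \<Sum>\<^sub>m x (x+m)\<^bsup>m-1\<^esup> z\<^sup>m/m!\<close> is the generating function of the Abel
  polynomials.  Abel's binomial identity gives \<open>E(x) E(y) = E(x+y)\<close>, hence the
  explicit powers \<open>R\<^sup>j = z\<^sup>j E(j)\<close>.  These yield the double-sum formula for the
  coefficients of \<open>T\<^sup>p\<close> and the Lagrange-type identity
  \<open>[z\<^sup>n] G(R) = [z\<^sup>n] G(z) e\<^bsup>nz\<^esup> (1 - z)\<close>.  With \<open>G = exp(\<lambda>z - \<lambda>z\<^sup>2/2)\<close>, so that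
  \<open>G(R) = exp(\<lambda>T)\<close>, and the substitution \<open>z \<mapsto> \<surd>\<lambda> z\<close>, the Hermite generating
  function \<open>exp(y z - z\<^sup>2/2)\<close> appears.

  Splitting off the component of a fixed vertex gives a bijection between
  \<open>(p+1)\<close>-component forests and pairs (tree, \<open>p\<close>-component forest on the rest), which
  turns into a convolution recurrence matching that of the coefficients of \<open>T\<^sup>p/p!\<close>.
  The tree counts entering it are given by Cayley's formula, proved by double
  counting trees with a marked oriented edge against two-component forests with a
  marked pair of vertices in different components.
\<close>

unbundle fps_syntax

section \<open>Abel polynomials and the rooted tree function\<close>

definition abel_poly :: "nat \<Rightarrow> real \<Rightarrow> real" where
  "abel_poly m x = (if m = 0 then 1 else x * (x + real m) ^ (m - 1))"

lemma abel_poly_0 [simp]: "abel_poly 0 x = 1"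
  by (simp add: abel_poly_def)

lemma abel_poly_at_0: "abel_poly m 0 = (if m = 0 then 1 else 0)"
  by (simp add: abel_poly_def)

lemma abel_poly_deriv:
  "(abel_poly k has_real_derivative (real k * abel_poly (k - 1) (x + 1))) (at x)"
proof (cases "k \<le> 1")
  case True
  then consider "k = 0" | "k = 1"
    by linarith
  then show ?thesis
  proof cases
    case 1
    then have "abel_poly k = (\<lambda>x. 1)"
      by (auto simp: abel_poly_def)
    then show ?thesis
      using 1 by simp
  next
    case 2
    then have "abel_poly k = (\<lambda>x. x)"
      by (auto simp: abel_poly_def)
    then show ?thesis
      using 2 by (simp add: abel_poly_def)
  qed
next
  case False
  then have "k = Suc (Suc (k - 2))"
    by simp
  then obtain i where k: "k = Suc (Suc i)"
    by blast
  have "abel_poly k = (\<lambda>x. x * (x + real k) ^ Suc i)"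
    using k by (auto simp: abel_poly_def)
  moreover have "((\<lambda>x. x * (x + real k) ^ Suc i) has_real_derivative
      1 * (x + real k) ^ Suc i + x * (real (Suc i) * (x + real k) ^ i * 1)) (at x)"
    by (intro derivative_eq_intros) auto
  moreover have "1 * (x + real k) ^ Suc i + x * (real (Suc i) * (x + real k) ^ i * 1)
      = real k * abel_poly (k - 1) (x + 1)"
    using k by (simp add: abel_poly_def algebra_simps)
  ultimately show ?thesis
    by simp
qed

lemma abel_binomial_sum_deriv:
  "((\<lambda>x. \<Sum>k\<le>Suc m. real (Suc m choose k) * abel_poly k x * abel_poly (Suc m - k) y)
    has_real_derivative
      real (Suc m) * (\<Sum>k\<le>m. real (m choose k) * abel_poly k (z + 1) * abel_poly (m - k) y)) (at z)"
proof -
  have "((\<lambda>x. \<Sum>k\<le>Suc m. real (Suc m choose k) * abel_poly k x * abel_poly (Suc m - k) y)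
      has_real_derivative (\<Sum>k\<le>Suc m. real (Suc m choose k) * (real k * abel_poly (k - 1) (z + 1))
        * abel_poly (Suc m - k) y)) (at z)"
    by (intro DERIV_sum DERIV_cmult DERIV_cmult_right abel_poly_deriv)
  also have "(\<Sum>k\<le>Suc m. real (Suc m choose k) * (real k * abel_poly (k - 1) (z + 1)) * abel_poly (Suc m - k) y)
      = (\<Sum>k\<le>m. real (Suc m choose Suc k) * real (Suc k) * abel_poly k (z + 1) * abel_poly (m - k) y)"
    by (simp only: sum.atMost_Suc_shift) (simp del: binomial_Suc_Suc add: mult_ac)
  also have "\<dots> = real (Suc m) * (\<Sum>k\<le>m. real (m choose k) * abel_poly k (z + 1) * abel_poly (m - k) y)"
    unfolding sum_distrib_left
  proof (intro sum.cong refl)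
    fix k
    have "real (Suc m choose Suc k) * real (Suc k) = real (Suc m) * real (m choose k)"
      by (metis Suc_times_binomial mult.commute of_nat_mult)
    then show "real (Suc m choose Suc k) * real (Suc k) * abel_poly k (z + 1) * abel_poly (m - k) y
        = real (Suc m) * (real (m choose k) * abel_poly k (z + 1) * abel_poly (m - k) y)"
      by (simp only: mult.assoc)
  qed
  finally show ?thesis .
qed

text \<open>By induction on \<open>m\<close>:
  both sides have the same derivative in \<open>x\<close> (by the induction hypothesis at
  \<open>x + 1\<close>) and agree at \<open>x = 0\<close>.\<close>

lemma abel_binomial:
  "(\<Sum>k\<le>m. real (m choose k) * abel_poly k x * abel_poly (m - k) y) = abel_poly m (x + y)"
proof (induction m arbitrary: x y)
  case 0
  then show ?case by simp
next
  case (Suc m)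
  define D where "D = (\<lambda>x. (\<Sum>k\<le>Suc m. real (Suc m choose k) * abel_poly k x * abel_poly (Suc m - k) y)
      - abel_poly (Suc m) (x + y))"
  have "(D has_real_derivative 0) (at z)" for z
  proof -
    have "((\<lambda>x. x + y) has_real_derivative 1) (at z)"
      by (auto intro!: derivative_eq_intros)
    from DERIV_chain2[where g = "\<lambda>x. x + y", OF abel_poly_deriv[of "Suc m"] this]
    have "((\<lambda>x. abel_poly (Suc m) (x + y)) has_real_derivative real (Suc m) * abel_poly m (z + y + 1)) (at z)"
      by (simp add: add_ac)
    from DERIV_diff[OF abel_binomial_sum_deriv[of m y z] this]
    show ?thesis
      unfolding D_def Suc.IH[of "z + 1" y] by (simp add: add_ac)
  qed
  then have "D x = D 0"
    using DERIV_isconst_all by blast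
  moreover have "D 0 = 0"
    by (simp add: D_def abel_poly_at_0 sum.atMost_Suc_shift del: sum.atMost_Suc)
  ultimately show ?case
    by (simp add: D_def)
qed

definition abel_fps :: "real \<Rightarrow> real fps" where
  "abel_fps x = Abs_fps (\<lambda>m. abel_poly m x / fact m)"

lemma abel_fps_nth [simp]: "abel_fps x $ m = abel_poly m x / fact m"
  by (simp add: abel_fps_def)

lemma abel_fps_mult: "abel_fps x * abel_fps y = abel_fps (x + y)"
proof (rule fps_ext)
  fix n
  have "(abel_fps x * abel_fps y) $ n
      = (\<Sum>i=0..n. abel_poly i x / fact i * (abel_poly (n - i) y / fact (n - i)))"
    by (simp add: fps_mult_nth)
  also have "\<dots> = (\<Sum>i\<le>n. real (n choose i) * abel_poly i x * abel_poly (n - i) y) / fact n"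
    unfolding sum_divide_distrib atMost_atLeast0
    by (intro sum.cong refl) (simp add: binomial_fact field_simps)
  also have "\<dots> = abel_fps (x + y) $ n"
    by (simp add: abel_binomial)
  finally show "(abel_fps x * abel_fps y) $ n = abel_fps (x + y) $ n" .
qed

lemma abel_fps_power: "abel_fps 1 ^ j = abel_fps (real j)"
proof (induction j)
  case 0
  show ?case by (rule fps_ext) (simp add: abel_poly_at_0)
next
  case (Suc j)
  then show ?case by (simp add: abel_fps_mult add_ac)
qed

text \<open>The rooted tree function \<open>R = z E(1) = \<Sum>\<^sub>k k\<^bsup>k-1\<^esup> z\<^sup>k / k!\<close>.\<close>

definition rooted_trees_egf :: "real fps" where
  "rooted_trees_egf = fps_X * abel_fps 1"

lemma rooted_trees_egf_power: "rooted_trees_egf ^ j = fps_X ^ j * abel_fps (real j)"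
  by (simp add: rooted_trees_egf_def power_mult_distrib abel_fps_power)

lemma rooted_trees_egf_power_nth:
  "(rooted_trees_egf ^ j) $ n = (if n < j then 0 else abel_poly (n - j) (real j) / fact (n - j))"
  by (simp add: rooted_trees_egf_power fps_X_power_mult_nth)

lemma rooted_trees_egf_nth0 [simp]: "rooted_trees_egf $ 0 = 0"
  by (simp add: rooted_trees_egf_def)

text \<open>The coefficient \<open>k! [z\<^sup>k] R = k\<^bsup>k-1\<^esup>\<close>, written so as to be correct also for \<open>k = 0\<close>.\<close>

lemma rooted_trees_egf_nth: "fact k * rooted_trees_egf $ k = real k ^ (k - 2) * real k"
proof (cases k)
  case 0
  then show ?thesis by simp
next
  case (Suc m)
  have "rooted_trees_egf $ k = (rooted_trees_egf ^ 1) $ k"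
    by simp
  also have "\<dots> = abel_poly m 1 / fact m"
    unfolding rooted_trees_egf_power_nth using Suc by simp
  also have "abel_poly m 1 = real k ^ (k - 2)"
    using Suc by (cases m) (simp_all add: abel_poly_def add_ac)
  finally show ?thesis
    using Suc by (simp add: fact_Suc)
qed

text \<open>More generally \<open>n! [z\<^sup>n] R\<^sup>j = (n-1 choose j-1) n\<^bsup>n-j\<^esup> j!\<close> for \<open>n \<ge> 1\<close>
  (the number of rooted forests on \<open>n\<close> labelled vertices with \<open>j\<close> ordered roots).\<close>

lemma rooted_trees_egf_power_coeff:
  assumes "n \<ge> 1"
  shows "fact n * (rooted_trees_egf ^ j) $ n =
     real (if j = 0 then 0 else (n - 1) choose (j - 1)) * real n ^ (n - j) * fact j"
proof (cases "j = 0 \<or> n \<le> j")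
  case True
  then show ?thesis
    using assms by (auto simp: rooted_trees_egf_power_nth abel_poly_def)
next
  case False
  then obtain i where j: "j = Suc i" and jn: "j < n"
    by (cases j) auto
  have "real ((n - 1) choose i) * fact i * fact (n - 1 - i) = fact (n - 1)"
    using jn j by (simp add: binomial_fact)
  moreover have "n - 1 - i = n - j"
    using j by simp
  ultimately have binom: "real ((n - 1) choose i) * fact i * fact (n - j) = fact (n - 1)"
    by simp
  have "fact n * (rooted_trees_egf ^ j) $ n
      = real n * fact (n - 1) * (real j * real n ^ (n - j - 1)) / fact (n - j)"
    using jn assms by (simp add: rooted_trees_egf_power_nth abel_poly_def fact_reduce)
  also have "\<dots> = real ((n - 1) choose i) * (real n * real n ^ (n - j - 1)) * (real j * fact i)"
    unfolding binom[symmetric] by (simp add: field_simps)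
  also have "\<dots> = real ((n - 1) choose i) * real n ^ (n - j) * fact j"
    using jn j by (simp add: fact_Suc power_Suc[symmetric] Suc_diff_Suc)
  finally show ?thesis
    using j by simp
qed

definition trees_egf :: "real fps" where
  "trees_egf = rooted_trees_egf - fps_const (1/2) * rooted_trees_egf ^ 2"

lemma trees_egf_nth0 [simp]: "trees_egf $ 0 = 0"
  by (simp add: trees_egf_def rooted_trees_egf_power_nth)

lemma trees_egf_nth:
  assumes "k \<ge> 1"
  shows "fact k * trees_egf $ k = real k ^ (k - 2)"
proof (cases "k = 1")
  case True
  then show ?thesis
    using rooted_trees_egf_nth[of 1] by (simp add: trees_egf_def rooted_trees_egf_power_nth)
next
  case False
  then have "k = Suc (Suc (k - 2))"
    using assms by simp
  then obtain i where k: "k = Suc (Suc i)"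
    by blast
  have square: "fact k * (rooted_trees_egf ^ 2) $ k = real (k - 1) * real k ^ (k - 2) * 2"
    using rooted_trees_egf_power_coeff[of k 2] k by (simp add: numeral_2_eq_2)
  have "fact k * trees_egf $ k = fact k * rooted_trees_egf $ k - fact k * (rooted_trees_egf ^ 2) $ k / 2"
    by (simp add: trees_egf_def algebra_simps)
  also have "\<dots> = real k ^ (k - 2)"
    unfolding square rooted_trees_egf_nth using k by (simp add: algebra_simps)
  finally show ?thesis .
qed

text \<open>Expanding \<open>T\<^sup>p = R\<^sup>p (1 - R/2)\<^sup>p\<close> by the binomial theorem gives the explicit
  double-sum formula of the theorem.\<close>

lemma trees_egf_power_expand:
  "trees_egf ^ p = (\<Sum>q\<le>p. fps_const (real (p choose q) * (- 1 / 2) ^ q) * rooted_trees_egf ^ (p + q))"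
proof -
  have T: "trees_egf = fps_const (- 1 / 2) * rooted_trees_egf ^ 2 + rooted_trees_egf"
    by (simp add: trees_egf_def fps_const_neg[symmetric] del: fps_const_neg)
  have "trees_egf ^ p = (\<Sum>q\<le>p. of_nat (p choose q)
      * (fps_const (- 1 / 2) * rooted_trees_egf ^ 2) ^ q * rooted_trees_egf ^ (p - q))"
    unfolding T by (rule binomial_ring)
  also have "\<dots> = (\<Sum>q\<le>p. fps_const (real (p choose q) * (- 1 / 2) ^ q) * rooted_trees_egf ^ (p + q))"
  proof (intro sum.cong refl)
    fix q assume "q \<in> {..p}"
    then have "rooted_trees_egf ^ (2 * q) * rooted_trees_egf ^ (p - q) = rooted_trees_egf ^ (p + q)"
      by (simp add: add.commute flip: power_add)
    then show "of_nat (p choose q) * (fps_const (- 1 / 2) * rooted_trees_egf ^ 2) ^ q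
        * rooted_trees_egf ^ (p - q)
        = fps_const (real (p choose q) * (- 1 / 2) ^ q) * rooted_trees_egf ^ (p + q)"
      by (simp add: power_mult_distrib fps_const_power fps_of_nat power_mult[symmetric]
          fps_const_mult[symmetric] mult_ac del: fps_const_mult)
  qed
  finally show ?thesis .
qed

lemma trees_egf_power_coeff:
  assumes "n \<ge> 1"
  shows "fact n / fact p * (trees_egf ^ p) $ n =
     (1 / fact p) * (\<Sum>q\<le>p. (- 1 / 2) ^ q * real (p choose q)
                 * real (if p + q = 0 then 0 else (n - 1) choose (p + q - 1))
                 * real n ^ (n - p - q) * fact (p + q))"
proof -
  have "fact n * (trees_egf ^ p) $ n
      = (\<Sum>q\<le>p. real (p choose q) * (- 1 / 2) ^ q * (fact n * (rooted_trees_egf ^ (p + q)) $ n))"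
    by (simp add: trees_egf_power_expand fps_sum_nth sum_distrib_left mult_ac)
  also have "\<dots> = (\<Sum>q\<le>p. (- 1 / 2) ^ q * real (p choose q)
                 * real (if p + q = 0 then 0 else (n - 1) choose (p + q - 1))
                 * real n ^ (n - p - q) * fact (p + q))"
    by (intro sum.cong refl) (simp add: rooted_trees_egf_power_coeff[OF assms] diff_diff_add)
  finally show ?thesis
    by simp
qed

section \<open>Convolution identities for exponential generating functions\<close>

text \<open>Multiplying exponential generating functions with one distinguished factor
  containing a fixed element: the convolution \<open>\<Sum>\<^sub>k (n-1 choose k-1) f\<^sub>k g\<^bsub>n-k\<^esub>\<close> of
  the normalized coefficients is \<open>(n-1)! [z\<^bsup>n-1\<^esup>] f' g\<close>.  This is the algebraic
  shadow of splitting off the block that contains a fixed element.\<close>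

lemma egf_pointed_convolution:
  fixes f g :: "real fps"
  assumes "n \<ge> 1"
  shows "(\<Sum>k=1..n. real ((n - 1) choose (k - 1)) * (fact k * f $ k) * (fact (n - k) * g $ (n - k)))
    = fact (n - 1) * (fps_deriv f * g) $ (n - 1)"
proof -
  obtain m where n: "n = Suc m"
    using assms by (cases n) auto
  have "(\<Sum>k=1..n. real ((n - 1) choose (k - 1)) * (fact k * f $ k) * (fact (n - k) * g $ (n - k)))
      = (\<Sum>i=0..m. real (m choose i) * (fact (Suc i) * f $ Suc i) * (fact (m - i) * g $ (m - i)))"
    unfolding n One_nat_def sum.shift_bounds_cl_Suc_ivl by simp
  also have "\<dots> = fact m * (\<Sum>i=0..m. real (Suc i) * f $ Suc i * g $ (m - i))"
    unfolding sum_distrib_left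
  proof (intro sum.cong refl)
    fix i assume "i \<in> {0..m}"
    then have binom: "real (m choose i) * fact i * fact (m - i) = fact m"
      by (simp add: binomial_fact)
    show "real (m choose i) * (fact (Suc i) * f $ Suc i) * (fact (m - i) * g $ (m - i))
        = fact m * (real (Suc i) * f $ Suc i * g $ (m - i))"
      unfolding binom[symmetric] by (simp add: fact_Suc algebra_simps)
  qed
  also have "\<dots> = fact (n - 1) * (fps_deriv f * g) $ (n - 1)"
    by (simp add: n fps_mult_nth fps_deriv_nth)
  finally show ?thesis .
qed

text \<open>The recurrence behind the count of forests: \<open>T\<^bsup>p+1\<^esup>/(p+1)!\<close> is obtained from
  \<open>T\<^sup>p/p!\<close> by convolving with \<open>T\<close> in pointed form, since
  \<open>(T\<^bsup>p+1\<^esup>/(p+1)!)' = T' T\<^sup>p/p!\<close>.\<close>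

lemma trees_egf_power_recurrence:
  assumes "n \<ge> 1"
  shows "fact n / fact (Suc p) * (trees_egf ^ Suc p) $ n =
    (\<Sum>k=1..n. real ((n - 1) choose (k - 1)) * (fact k * trees_egf $ k)
       * (fact (n - k) / fact p * (trees_egf ^ p) $ (n - k)))"
proof -
  obtain m where n: "n = Suc m"
    using assms by (cases n) auto
  define h where "h = fps_deriv trees_egf * trees_egf ^ p"
  define g where "g = fps_const (1 / fact p) * trees_egf ^ p"
  have deriv: "fps_deriv (trees_egf ^ Suc p) = fps_const (real (Suc p)) * h"
    unfolding h_def by (simp only: fps_deriv_power mult.assoc) simp
  have "real (Suc m) * (trees_egf ^ Suc p) $ Suc m = fps_deriv (trees_egf ^ Suc p) $ m"
    by (simp only: fps_deriv_nth Suc_eq_plus1)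
  also have "\<dots> = real (Suc p) * h $ m"
    unfolding deriv by (rule fps_mult_left_const_nth)
  finally have "fact n / fact (Suc p) * (trees_egf ^ Suc p) $ n = fact m * (h $ m / fact p)"
    by (simp add: n fact_Suc field_simps del: of_nat_Suc)
  also have "h $ m / fact p = (fps_deriv trees_egf * g) $ m"
    by (simp add: h_def g_def mult.left_commute[of "fps_deriv trees_egf"])
  finally have "fact n / fact (Suc p) * (trees_egf ^ Suc p) $ n
      = fact m * (fps_deriv trees_egf * g) $ m" .
  also have "\<dots> = (\<Sum>k=1..n. real ((n - 1) choose (k - 1)) * (fact k * trees_egf $ k)
       * (fact (n - k) * g $ (n - k)))"
    using egf_pointed_convolution[OF assms, of trees_egf g] by (simp add: n)
  finally show ?thesis
    by (simp add: g_def)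
qed

text \<open>The identity \<open>\<Sum>\<^sub>k (n-1 choose k-1) k\<^bsup>k-1\<^esup> (n-k)\<^bsup>n-k-1\<^esup> = 2 (n-1) n\<^bsup>n-2\<^esup>\<close>
  behind the double counting in Cayley's formula: by symmetry \<open>R' R = (R\<^sup>2)'/2\<close>,
  and \<open>[z\<^sup>n] R\<^sup>2\<close> is known explicitly.\<close>

lemma rooted_trees_egf_convolution:
  assumes "n \<ge> 2"
  shows "(\<Sum>k=1..n. real ((n - 1) choose (k - 1)) * (fact k * rooted_trees_egf $ k)
      * (fact (n - k) * rooted_trees_egf $ (n - k))) = real (n - 1) * real n ^ (n - 2)"
proof -
  obtain m where n: "n = Suc m"
    using assms by (cases n) auto
  define h where "h = fps_deriv rooted_trees_egf * rooted_trees_egf"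
  have deriv: "fps_deriv (rooted_trees_egf ^ 2) = h + h"
    by (simp add: h_def power2_eq_square mult.commute)
  have "real (Suc m) * (rooted_trees_egf ^ 2) $ Suc m = fps_deriv (rooted_trees_egf ^ 2) $ m"
    by (simp only: fps_deriv_nth Suc_eq_plus1)
  also have "\<dots> = 2 * h $ m"
    unfolding deriv by (simp only: fps_add_nth mult_2)
  finally have "real (Suc m) * (rooted_trees_egf ^ 2) $ Suc m = 2 * h $ m" .
  moreover have "fact n * (rooted_trees_egf ^ 2) $ n = real (n - 1) * real n ^ (n - 2) * 2"
    using rooted_trees_egf_power_coeff[of n 2] assms by (simp add: numeral_2_eq_2)
  ultimately have "fact m * h $ m = real (n - 1) * real n ^ (n - 2)"
    by (simp add: n fact_Suc field_simps del: of_nat_Suc)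
  then show ?thesis
    using egf_pointed_convolution[of n rooted_trees_egf rooted_trees_egf] assms by (simp add: n h_def)
qed

section \<open>Composition with the tree function and Hermite polynomials\<close>

lemma fps_linear_ode_unique:
  fixes f g k :: "real fps"
  assumes "fps_deriv f = f * k" "fps_deriv g = g * k" "f $ 0 = g $ 0"
  shows "f = g"
proof -
  have "f $ n = g $ n" for n
  proof (induction n rule: less_induct)
    case (less n)
    show ?case
    proof (cases n)
      case 0
      then show ?thesis using assms by simp
    next
      case (Suc m)
      have "real (Suc m) * f $ Suc m = (f * k) $ m"
        using arg_cong[OF assms(1), of "\<lambda>h. h $ m"] by simp
      also have "\<dots> = (g * k) $ m"
        unfolding fps_mult_nth using less Suc by (intro sum.cong refl) auto
      also have "\<dots> = real (Suc m) * g $ Suc m"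
        using arg_cong[OF assms(2), of "\<lambda>h. h $ m"] by simp
      finally show ?thesis
        using Suc by simp
    qed
  qed
  then show ?thesis
    by (simp add: fps_eq_iff)
qed

lemma fps_exp_compose_add:
  fixes a b :: "real fps"
  assumes "a $ 0 = 0" "b $ 0 = 0"
  shows "fps_exp 1 oo (a + b) = (fps_exp 1 oo a) * (fps_exp 1 oo b)"
proof -
  have deriv: "fps_deriv (fps_exp 1 oo q) = (fps_exp 1 oo q) * fps_deriv q" if "q $ 0 = 0" for q :: "real fps"
    using fps_compose_deriv[OF that, of "fps_exp 1"] by simp
  show ?thesis
    by (rule fps_linear_ode_unique[where k = "fps_deriv (a + b)"]) (simp_all add: assms deriv algebra_simps)
qed

text \<open>The powers of \<open>R\<close> satisfy \<open>[z\<^sup>n] R\<^sup>i = [z\<^bsup>n-i\<^esup>] e\<^bsup>nz\<^esup> (1 - z)\<close> for \<open>i \<le> n\<close>; this is Lagrange inversion for \<open>R = z e\<^sup>R\<close> in explicit form.\<close>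

lemma rooted_trees_egf_power_nth_lagrange:
  assumes "i \<le> n"
  shows "(rooted_trees_egf ^ i) $ n = (fps_exp (real n) * (1 - fps_X)) $ (n - i)"
proof -
  have coeff: "(fps_exp (real n) * (1 - fps_X)) $ m =
      real n ^ m / fact m - (if m = 0 then 0 else real n ^ (m - 1) / fact (m - 1))" for m
    by (simp only: right_diff_distrib mult_1_right fps_sub_nth fps_X_mult_right_nth fps_exp_nth) simp
  show ?thesis
  proof (cases "n - i")
    case 0
    then show ?thesis
      using assms by (simp add: rooted_trees_egf_power_nth coeff)
  next
    case (Suc m)
    have i: "real i = real n - real (Suc m)"
      using Suc assms by auto
    have "(rooted_trees_egf ^ i) $ n = real i * real n ^ m / fact (Suc m)"
      using Suc assms by (simp add: rooted_trees_egf_power_nth abel_poly_def i)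
    also have "\<dots> = real n ^ Suc m / fact (Suc m) - real n ^ m / fact m"
    proof -
      have "real n ^ m / fact m = real (Suc m) * real n ^ m / fact (Suc m)"
        by (simp add: fact_Suc)
      then show ?thesis
        unfolding i by (simp add: diff_divide_distrib algebra_simps)
    qed
    finally show ?thesis
      using Suc by (simp add: coeff)
  qed
qed

lemma compose_rooted_trees_egf_nth:
  "(G oo rooted_trees_egf) $ n = (G * (fps_exp (real n) * (1 - fps_X))) $ n"
  unfolding fps_compose_nth fps_mult_nth[of G]
  by (intro sum.cong refl) (subst rooted_trees_egf_power_nth_lagrange, auto)

lemma exp_trees_egf_compose:
  "fps_exp lam oo trees_egf =
     (fps_exp 1 oo (fps_const lam * fps_X - fps_const (lam / 2) * fps_X ^ 2)) oo rooted_trees_egf"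
proof -
  define P where "P = fps_const lam * fps_X - fps_const (lam / 2) * fps_X ^ 2"
  have "fps_const lam * fps_const (1/2) = fps_const (lam/2)"
    unfolding fps_const_mult by simp
  then have P_R: "P oo rooted_trees_egf = fps_const lam * trees_egf"
    by (simp add: P_def trees_egf_def fps_compose_sub_distrib fps_compose_mult_distrib
        fps_X_power_compose algebra_simps flip: fps_const_mult)
  have "fps_exp lam oo trees_egf = fps_exp 1 oo ((fps_const lam * fps_X) oo trees_egf)"
    by (subst fps_compose_assoc) simp_all
  also have "\<dots> = fps_exp 1 oo (P oo rooted_trees_egf)"
    by (simp add: P_R fps_compose_mult_distrib)
  also have "\<dots> = (fps_exp 1 oo P) oo rooted_trees_egf"
    by (rule fps_compose_assoc) (simp_all add: P_def)
  finally show ?thesis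
    unfolding P_def .
qed

lemma hermiteHe_rescaled:
  "fact j * ((fps_exp 1 oo (fps_const y * fps_X - fps_const (1 / 2) * fps_X ^ 2))
      oo (fps_const s * fps_X)) $ j = s ^ j * hermiteHe j y"
  by (simp add: fps_nth_compose_linear hermiteHe_def)

text \<open>Completing the square: if \<open>s\<^sup>2 = \<lambda>\<close> and \<open>s y = \<lambda> + c\<close>, then
  \<open>exp(\<lambda>z - \<lambda>z\<^sup>2/2) e\<^bsup>cz\<^esup>\<close> is the Hermite generating function \<open>exp(y w - w\<^sup>2/2)\<close>
  at \<open>w = s z\<close>.\<close>

lemma exp_gaussian_shift:
  fixes s y lam c :: real
  assumes "s * s = lam" "s * y = lam + c"
  shows "(fps_exp 1 oo (fps_const lam * fps_X - fps_const (lam / 2) * fps_X ^ 2)) * fps_exp c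
    = (fps_exp 1 oo (fps_const y * fps_X - fps_const (1 / 2) * fps_X ^ 2)) oo (fps_const s * fps_X)"
proof -
  define P where "P = fps_const lam * fps_X - fps_const (lam / 2) * fps_X ^ 2"
  define Q where "Q = fps_const y * fps_X - fps_const (1 / 2) * fps_X ^ 2"
  have "P + fps_const c * fps_X = Q oo (fps_const s * fps_X)"
  proof (rule fps_ext)
    fix k
    show "(P + fps_const c * fps_X) $ k = (Q oo (fps_const s * fps_X)) $ k"
      using assms by (cases "k = 1"; cases "k = 2") (auto simp add: P_def Q_def fps_X_power_nth power2_eq_square)
  qed
  then have "(fps_exp 1 oo P) * fps_exp c = fps_exp 1 oo (Q oo (fps_const s * fps_X))"
    using fps_exp_compose_add[of P "fps_const c * fps_X"] by (simp add: P_def)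
  also have "\<dots> = (fps_exp 1 oo Q) oo (fps_const s * fps_X)"
    by (rule fps_compose_assoc) (simp_all add: Q_def)
  finally show ?thesis
    unfolding P_def Q_def .
qed

text \<open>With \<open>s = \<surd>\<lambda>\<close> and
  \<open>y = s + n/s\<close>, the composition identity and completing the square reduce the
  coefficient to \<open>[z\<^sup>n] H(z) (1 - z)\<close> for the rescaled Hermite series \<open>H\<close>.\<close>

lemma exp_trees_egf_hermite:
  fixes lam :: real
  assumes n: "n \<ge> 1" and lam: "lam > 0"
  shows "fact n * (fps_exp lam oo trees_egf) $ n =
     sqrt lam ^ n * (hermiteHe n (sqrt lam + real n / sqrt lam)
              - real n / sqrt lam * hermiteHe (n - 1) (sqrt lam + real n / sqrt lam))"
proof -
  define s where "s = sqrt lam"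
  define y where "y = s + real n / s"
  define H where
    "H = (fps_exp 1 oo (fps_const y * fps_X - fps_const (1 / 2) * fps_X ^ 2)) oo (fps_const s * fps_X)"
  obtain m where m: "n = Suc m"
    using n by (cases n) auto
  have s: "s > 0" "s * s = lam"
    using lam by (simp_all add: s_def)
  have "s * y = lam + real n"
    using s by (simp add: y_def field_simps)
  then have "(fps_exp lam oo trees_egf) $ n = (H * (1 - fps_X)) $ n"
    unfolding exp_trees_egf_compose compose_rooted_trees_egf_nth H_def
    by (simp only: mult.assoc[symmetric] exp_gaussian_shift[OF s(2)])
  also have "\<dots> = H $ n - H $ m"
    by (simp add: m right_diff_distrib)
  finally have "fact n * (fps_exp lam oo trees_egf) $ n = fact n * H $ n - fact n * H $ m"
    by (simp only: right_diff_distrib)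
  also have "\<dots> = fact n * H $ n - real n * (fact m * H $ m)"
    by (simp add: m fact_Suc)
  also have "\<dots> = s ^ n * hermiteHe n y - real n * s ^ m * hermiteHe m y"
    unfolding H_def hermiteHe_rescaled by simp
  also have "\<dots> = s ^ n * (hermiteHe n y - real n / s * hermiteHe m y)"
    using s by (simp add: m field_simps)
  finally show ?thesis
    unfolding s_def y_def m by simp
qed

section \<open>Spanning forests on a finite vertex set\<close>

text \<open>Forests are handled on an arbitrary finite vertex set \<open>V\<close>, so that the
  vertex set can be split.  \<open>edges_in V\<close> are the edges of the complete graph on
  \<open>V\<close>, \<open>reach F\<close> is connectivity in the graph with edge set \<open>F\<close>, \<open>component F x\<close>
  is the connected component of \<open>x\<close>, \<open>comps V F\<close> the partition of \<open>V\<close> into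
  components, and \<open>forests V p\<close> the spanning forests of \<open>V\<close> with \<open>p\<close> components.\<close>

definition edges_in :: "nat set \<Rightarrow> nat set set" where
  "edges_in V = {e. \<exists>a b. a \<in> V \<and> b \<in> V \<and> a \<noteq> b \<and> e = {a, b}}"

abbreviation reach :: "nat set set \<Rightarrow> (nat \<times> nat) set" where
  "reach F \<equiv> (edge_rel F)\<^sup>*"

definition component :: "nat set set \<Rightarrow> nat \<Rightarrow> nat set" where
  "component F x = {y. (x, y) \<in> reach F}"

definition comps :: "nat set \<Rightarrow> nat set set \<Rightarrow> nat set set" where
  "comps V F = V // {(a, b). a \<in> V \<and> b \<in> V \<and> (a, b) \<in> reach F}"

definition forests :: "nat set \<Rightarrow> nat \<Rightarrow> nat set set set" where
  "forests V p = {F. F \<subseteq> edges_in V \<and> is_forest F \<and> card (comps V F) = p}"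

lemma u_e2_forests: "u_e2 n p = card (forests {0..<n} p)"
proof -
  have "Kn_edges n = edges_in {0..<n}"
    by (auto simp: Kn_edges_def edges_in_def)
  moreover have "components n F = comps {0..<n} F" for F
    unfolding components_def comps_def by (rule arg_cong[where f = "\<lambda>r. {0..<n} // r"]) auto
  ultimately show ?thesis
    by (simp add: u_e2_def forests_def)
qed

lemma edge_rel_iff [simp]: "(a, b) \<in> edge_rel F \<longleftrightarrow> {a, b} \<in> F"
  by (simp add: edge_rel_def)

lemma sym_edge_rel: "sym (edge_rel F)"
  by (auto simp: sym_def insert_commute)

lemma reach_sym: "(x, y) \<in> reach F \<Longrightarrow> (y, x) \<in> reach F"
  using sym_rtrancl[OF sym_edge_rel] by (auto simp: sym_def)

lemma reach_trans: "(x, y) \<in> reach F \<Longrightarrow> (y, z) \<in> reach F \<Longrightarrow> (x, z) \<in> reach F"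
  by (rule rtrancl_trans)

lemma reach_edge: "{a, b} \<in> F \<Longrightarrow> (a, b) \<in> reach F"
  by (rule r_into_rtrancl) simp

lemma reach_mono: "F \<subseteq> G \<Longrightarrow> (x, y) \<in> reach F \<Longrightarrow> (x, y) \<in> reach G"
  by (rule rtrancl_mono[THEN subsetD]) (auto simp: edge_rel_def)

lemma reach_end: "(x, y) \<in> reach F \<Longrightarrow> x \<noteq> y \<Longrightarrow> y \<in> \<Union>F"
  by (erule rtranclE) auto

lemma reach_out: "x \<notin> \<Union>F \<Longrightarrow> (x, y) \<in> reach F \<longleftrightarrow> y = x"
  using reach_end[OF reach_sym] by blast

lemma edges_in_Union: "F \<subseteq> edges_in V \<Longrightarrow> \<Union>F \<subseteq> V"
  by (auto simp: edges_in_def)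

lemma edges_in_mono: "V \<subseteq> W \<Longrightarrow> edges_in V \<subseteq> edges_in W"
  by (auto simp: edges_in_def)

lemma finite_edges_in: "finite V \<Longrightarrow> finite (edges_in V)"
  by (rule finite_subset[of _ "Pow V"]) (auto simp: edges_in_def)

lemma finite_forests: "finite V \<Longrightarrow> finite (forests V p)"
  by (rule finite_subset[of _ "Pow (edges_in V)"]) (auto simp: forests_def finite_edges_in)

lemma reach_in: "F \<subseteq> edges_in V \<Longrightarrow> x \<in> V \<Longrightarrow> (x, y) \<in> reach F \<Longrightarrow> y \<in> V"
  using reach_end edges_in_Union by blast

lemma reach_insert:
  "(x, y) \<in> reach (insert {a, b} F) \<longleftrightarrow>
     (x, y) \<in> reach F \<or> ((x, a) \<in> reach F \<and> (b, y) \<in> reach F) \<or> ((x, b) \<in> reach F \<and> (a, y) \<in> reach F)"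
proof -
  have "edge_rel (insert {a, b} F) = insert (a, b) (insert (b, a) (edge_rel F))"
    by (auto simp: edge_rel_def doubleton_eq_iff)
  then show ?thesis
    by (simp add: rtrancl_insert) (blast intro: rtrancl_trans)
qed

lemma reach_union:
  assumes "\<Union>F1 \<inter> \<Union>F2 = {}"
  shows "(x, y) \<in> reach (F1 \<union> F2) \<longleftrightarrow> (x, y) \<in> reach F1 \<or> (x, y) \<in> reach F2"
proof
  assume "(x, y) \<in> reach (F1 \<union> F2)"
  then show "(x, y) \<in> reach F1 \<or> (x, y) \<in> reach F2"
  proof (induction rule: rtrancl_induct)
    case base
    then show ?case by simp
  next
    case (step z w)
    then have "{z, w} \<in> F1 \<or> {z, w} \<in> F2"
      by simp
    moreover have "(x, z) \<in> reach F1 \<Longrightarrow> {z, w} \<in> F2 \<Longrightarrow> x = z"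
      and "(x, z) \<in> reach F2 \<Longrightarrow> {z, w} \<in> F1 \<Longrightarrow> x = z"
      using reach_end assms by blast+
    ultimately show ?case
      using step.IH reach_edge reach_trans by blast
  qed
next
  assume "(x, y) \<in> reach F1 \<or> (x, y) \<in> reach F2"
  then show "(x, y) \<in> reach (F1 \<union> F2)"
    using reach_mono[of F1 "F1 \<union> F2"] reach_mono[of F2 "F1 \<union> F2"] by blast
qed

lemma component_self: "x \<in> component F x"
  by (simp add: component_def)

lemma component_subset: "F \<subseteq> edges_in V \<Longrightarrow> x \<in> V \<Longrightarrow> component F x \<subseteq> V"
  using reach_in by (auto simp: component_def)

lemma component_eq: "y \<in> component F x \<Longrightarrow> component F y = component F x"
  unfolding component_def using reach_sym reach_trans by blast

lemma comps_eq: "F \<subseteq> edges_in V \<Longrightarrow> comps V F = component F ` V"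
  unfolding comps_def quotient_def component_def using reach_in by blast

lemma finite_comps: "finite V \<Longrightarrow> F \<subseteq> edges_in V \<Longrightarrow> finite (comps V F)"
  by (simp add: comps_eq)

lemma comps_empty: "comps V {} = (\<lambda>x. {x}) ` V"
proof -
  have "component {} x = {x}" for x
    using reach_out[of x "{}"] by (auto simp: component_def)
  then show ?thesis
    by (simp add: comps_eq)
qed

lemma component_union_left:
  assumes "\<Union>F1 \<inter> \<Union>F2 = {}" and "x \<notin> \<Union>F2"
  shows "component (F1 \<union> F2) x = component F1 x"
  using reach_union[OF assms(1)] reach_out[OF assms(2)] component_self[of x F1]
  unfolding component_def by auto

lemma component_insert:
  shows "component (insert {a, b} F) x =
    (if x \<in> component F a \<union> component F b then component F a \<union> component F b else component F x)"
proof -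
  let ?G = "insert {a, b} F"
  let ?M = "component F a \<union> component F b"
  have mono: "(u, v) \<in> reach F \<Longrightarrow> (u, v) \<in> reach ?G" for u v
    using reach_mono[of F ?G] by blast
  have ab: "(a, b) \<in> reach ?G"
    by (rule reach_edge) simp
  show ?thesis
  proof (cases "x \<in> ?M")
    case True
    then have x: "(x, a) \<in> reach ?G" "(x, b) \<in> reach ?G"
      using ab reach_sym reach_trans mono unfolding component_def by blast+
    have "component ?G x \<subseteq> ?M"
    proof
      fix y
      assume "y \<in> component ?G x"
      then have "(x, y) \<in> reach ?G"
        by (simp add: component_def)
      with True show "y \<in> ?M"
        unfolding reach_insert component_def using reach_sym reach_trans by blast
    qed
    moreover have "?M \<subseteq> component ?G x"
      unfolding component_def using x mono reach_trans by blast
    ultimately show ?thesis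
      using True by simp
  next
    case False
    then have "(x, a) \<notin> reach F" "(x, b) \<notin> reach F"
      unfolding component_def using reach_sym by blast+
    then have "component ?G x = component F x"
      unfolding component_def using reach_insert mono by blast
    then show ?thesis
      using False by simp
  qed
qed

lemma connected_component:
  assumes F: "F \<subseteq> edges_in C" and "card (comps C F) = 1" and x: "x \<in> C"
  shows "component F x = C"
proof -
  obtain D where D: "comps C F = {D}"
    using assms(2) card_1_singletonE by blast
  have all: "component F y = D" if "y \<in> C" for y
    using D that unfolding comps_eq[OF F] by blast
  show ?thesis
  proof
    show "component F x \<subseteq> C"
      using component_subset[OF F x] .
    show "C \<subseteq> component F x"
      using all[OF x] all component_self by blast
  qed
qed

lemma comps_connected:
  assumes F: "F \<subseteq> edges_in C" and "card (comps C F) = 1"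
  shows "comps C F = {C}"
proof -
  have "C \<noteq> {}"
    using assms(2) comps_eq[OF F] by auto
  then show ?thesis
    using comps_eq[OF F] connected_component[OF assms] by auto
qed

lemma is_forest_mono: "is_forest F \<Longrightarrow> G \<subseteq> F \<Longrightarrow> is_forest G"
  unfolding is_forest_def by (meson Diff_mono order_refl reach_mono subsetD)

lemma is_forest_empty: "is_forest {}"
  by (simp add: is_forest_def)

lemma forest_insert:
  assumes forest: "is_forest F" and bridge: "(a, b) \<notin> reach F"
  shows "is_forest (insert {a, b} F)"
  unfolding is_forest_def
proof (intro ballI allI impI)
  fix e c d
  assume e: "e \<in> insert {a, b} F" and cd: "e = {c, d}"
  show "(c, d) \<notin> reach (insert {a, b} F - {e})"
  proof (cases "e = {a, b}")
    case True
    then have "insert {a, b} F - {e} = F"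
      using bridge reach_edge by auto
    moreover have "(c = a \<and> d = b) \<or> (c = b \<and> d = a)"
      using True cd by (auto simp: doubleton_eq_iff)
    ultimately show ?thesis
      using bridge reach_sym by metis
  next
    case False
    then have eF: "e \<in> F" and rest: "insert {a, b} F - {e} = insert {a, b} (F - {e})"
      using e by auto
    have not_cd: "(c, d) \<notin> reach (F - {e})"
      using forest eF cd unfolding is_forest_def by blast
    have cd_F: "(c, d) \<in> reach F"
      using eF cd reach_edge by blast
    have sub: "(u, v) \<in> reach F" if "(u, v) \<in> reach (F - {e})" for u v
      using reach_mono[OF _ that, of F] by blast
    show ?thesis
    proof
      assume "(c, d) \<in> reach (insert {a, b} F - {e})"
      then consider "(c, a) \<in> reach (F - {e})" "(b, d) \<in> reach (F - {e})"
        | "(c, b) \<in> reach (F - {e})" "(a, d) \<in> reach (F - {e})"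
        using not_cd unfolding rest reach_insert by blast
      then have "(a, b) \<in> reach F"
        by cases (metis sub cd_F reach_sym reach_trans)+
      then show False
        using bridge by blast
    qed
  qed
qed

lemma forest_edge_bridge:
  assumes "is_forest F" "{a, b} \<in> F"
  shows "(a, b) \<notin> reach (F - {{a, b}})"
  using assms unfolding is_forest_def by blast

lemma comps_insert_bridge:
  assumes F: "F \<subseteq> edges_in V" and a: "a \<in> V" and b: "b \<in> V" and bridge: "(a, b) \<notin> reach F"
  defines "S \<equiv> component F ` (V - (component F a \<union> component F b))"
  shows "comps V (insert {a, b} F) = insert (component F a \<union> component F b) S"
    and "comps V F = insert (component F a) (insert (component F b) S)"
proof -
  let ?G = "insert {a, b} F"
  let ?M = "component F a \<union> component F b"
  have G: "?G \<subseteq> edges_in V"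
    using F a b bridge by (auto simp: edges_in_def)
  have "comps V ?G = component ?G ` V"
    using G by (rule comps_eq)
  also have "\<dots> = component ?G ` (V \<inter> ?M) \<union> component ?G ` (V - ?M)"
    by blast
  also have "component ?G ` (V \<inter> ?M) = {?M}"
    using a component_self[of a F] by (auto simp: component_insert)
  also have "component ?G ` (V - ?M) = S"
    unfolding S_def by (intro image_cong refl) (auto simp: component_insert)
  finally show "comps V ?G = insert ?M S"
    by simp
  have "comps V F = component F ` V"
    using F by (rule comps_eq)
  also have "\<dots> = component F ` (V \<inter> component F a) \<union> component F ` (V \<inter> component F b) \<union> S"
    unfolding S_def by blast
  also have "component F ` (V \<inter> component F a) = {component F a}"
    using a component_self[of a F] component_eq by blast
  also have "component F ` (V \<inter> component F b) = {component F b}"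
    using b component_self[of b F] component_eq by blast
  finally show "comps V F = insert (component F a) (insert (component F b) S)"
    by auto
qed

lemma card_comps_insert_bridge:
  assumes V: "finite V" and F: "F \<subseteq> edges_in V" and a: "a \<in> V" and b: "b \<in> V"
    and bridge: "(a, b) \<notin> reach F"
  shows "card (comps V (insert {a, b} F)) + 1 = card (comps V F)"
proof -
  define Ca where "Ca = component F a"
  define Cb where "Cb = component F b"
  define S where "S = component F ` (V - (Ca \<union> Cb))"
  have not_S: "D \<notin> S" if "a \<in> D \<or> b \<in> D" "D \<subseteq> Ca \<union> Cb" for D
  proof
    assume "D \<in> S"
    then obtain x where x: "x \<in> V - (Ca \<union> Cb)" "D = component F x"
      unfolding S_def by blast
    then have "component F a = D \<or> component F b = D"
      using that component_eq by blast
    then have "x \<in> Ca \<union> Cb"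
      using x component_self[of x F] unfolding Ca_def Cb_def by blast
    then show False
      using x by blast
  qed
  have "Ca \<notin> S"
    using not_S[of Ca] component_self[of a F] unfolding Ca_def by blast
  moreover have "Cb \<notin> S"
    using not_S[of Cb] component_self[of b F] unfolding Cb_def by blast
  moreover have "Ca \<union> Cb \<notin> S"
    using not_S[of "Ca \<union> Cb"] component_self[of a F] unfolding Ca_def by blast
  moreover have "Ca \<noteq> Cb"
    using bridge component_self[of b F] unfolding Ca_def Cb_def component_def by blast
  moreover have "finite S"
    using V unfolding S_def by simp
  ultimately show ?thesis
    using comps_insert_bridge[OF F a b bridge] unfolding Ca_def Cb_def S_def by simp
qed

lemma forest_edges_plus_comps:
  assumes V: "finite V" and F: "F \<subseteq> edges_in V" and forest: "is_forest F"
  shows "card F + card (comps V F) = card V"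
proof -
  have "finite F"
    using finite_subset[OF F finite_edges_in[OF V]] .
  then show ?thesis
    using F forest
  proof (induction F rule: finite_induct)
    case empty
    have "card ((\<lambda>x. {x}) ` V) = card V"
      by (rule card_image) (simp add: inj_on_def)
    then show ?case
      by (simp add: comps_empty)
  next
    case (insert e F)
    obtain a b where ab: "a \<in> V" "b \<in> V" "e = {a, b}"
      using insert.prems(1) by (auto simp: edges_in_def)
    have F: "F \<subseteq> edges_in V" "is_forest F"
      using insert.prems is_forest_mono by auto
    have "insert e F - {e} = F"
      using insert.hyps(2) by simp
    then have "(a, b) \<notin> reach F"
      using forest_edge_bridge[of "insert e F" a b] insert.prems(2) ab by simp
    then have "card (comps V (insert e F)) + 1 = card (comps V F)"
      using card_comps_insert_bridge[OF V F(1) ab(1,2)] ab by simp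
    then show ?case
      using insert.IH[OF F] insert.hyps by simp
  qed
qed

text \<open>Forests on disjoint vertex sets combine to a forest: an edge of \<open>F1\<close> is
  still a bridge after adding \<open>F2\<close>, as \<open>F2\<close> does not touch its endpoints.\<close>

lemma forest_union_bridge:
  assumes disj: "\<Union>F1 \<inter> \<Union>F2 = {}" and forest: "is_forest F1" and e: "e \<in> F1" "e = {a, b}"
  shows "(a, b) \<notin> reach (F1 \<union> F2 - {e})"
proof
  assume ab: "(a, b) \<in> reach (F1 \<union> F2 - {e})"
  have a: "a \<in> \<Union>F1"
    using e by blast
  then have "e \<notin> F2"
    using e disj by blast
  then have split: "F1 \<union> F2 - {e} = (F1 - {e}) \<union> F2"
    by blast
  have disj': "\<Union>(F1 - {e}) \<inter> \<Union>F2 = {}"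
    using disj by blast
  have not_F1: "(a, b) \<notin> reach (F1 - {e})"
    using forest e unfolding is_forest_def by blast
  then have "a \<noteq> b"
    by blast
  moreover have "a \<notin> \<Union>F2"
    using disj a by blast
  ultimately have "(a, b) \<notin> reach F2"
    using reach_out[of a F2 b] by simp
  moreover have "(a, b) \<in> reach (F1 - {e}) \<or> (a, b) \<in> reach F2"
    using ab unfolding split by (simp only: reach_union[OF disj'])
  ultimately show False
    using not_F1 by blast
qed

lemma forest_union:
  assumes disj: "\<Union>F1 \<inter> \<Union>F2 = {}" and forests: "is_forest F1" "is_forest F2"
  shows "is_forest (F1 \<union> F2)"
  unfolding is_forest_def
proof (intro ballI allI impI)
  fix e a b
  assume "e \<in> F1 \<union> F2" and ab: "e = {a, b}"
  then consider "e \<in> F1" | "e \<in> F2"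
    by blast
  then show "(a, b) \<notin> reach (F1 \<union> F2 - {e})"
  proof cases
    case 1
    then show ?thesis
      using forest_union_bridge[OF disj forests(1) _ ab] by blast
  next
    case 2
    have "\<Union>F2 \<inter> \<Union>F1 = {}"
      using disj by blast
    then show ?thesis
      using forest_union_bridge[OF _ forests(2) 2 ab, of F1] by (simp add: Un_commute)
  qed
qed

section \<open>Splitting off the component of a fixed vertex\<close>

lemma component_join:
  assumes T: "T \<subseteq> edges_in C" "card (comps C T) = 1" and F': "F' \<subseteq> edges_in (V - C)"
  shows "\<Union>T \<inter> \<Union>F' = {}"
    and "x \<in> C \<Longrightarrow> component (T \<union> F') x = C"
    and "x \<notin> C \<Longrightarrow> component (T \<union> F') x = component F' x"
proof -
  have T_C: "\<Union>T \<subseteq> C" and F'_C: "\<Union>F' \<subseteq> V - C"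
    using edges_in_Union[OF T(1)] edges_in_Union[OF F'] .
  then show disj: "\<Union>T \<inter> \<Union>F' = {}"
    by blast
  show "component (T \<union> F') x = C" if "x \<in> C"
  proof -
    have "x \<notin> \<Union>F'"
      using that F'_C by blast
    then have "component (T \<union> F') x = component T x"
      using component_union_left[OF disj] by blast
    also have "\<dots> = C"
      using connected_component[OF T that] .
    finally show ?thesis .
  qed
  show "component (T \<union> F') x = component F' x" if "x \<notin> C"
  proof -
    have "\<Union>F' \<inter> \<Union>T = {}" "x \<notin> \<Union>T"
      using disj that T_C by blast+
    then show ?thesis
      using component_union_left[of F' T x] by (simp add: Un_commute)
  qed
qed

lemma comps_join:
  assumes v0: "v0 \<in> C" and CV: "C \<subseteq> V" and T: "T \<subseteq> edges_in C" "card (comps C T) = 1"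
    and F': "F' \<subseteq> edges_in (V - C)"
  shows "comps V (T \<union> F') = insert C (comps (V - C) F')" "C \<notin> comps (V - C) F'"
proof -
  have "T \<union> F' \<subseteq> edges_in V"
    using T F' edges_in_mono[of C V] edges_in_mono[of "V - C" V] CV by blast
  then have "comps V (T \<union> F') = component (T \<union> F') ` V"
    by (rule comps_eq)
  also have "\<dots> = component (T \<union> F') ` C \<union> component (T \<union> F') ` (V - C)"
    using CV by blast
  also have "component (T \<union> F') ` C = {C}"
    using component_join(2)[OF T F'] v0 by blast
  also have "component (T \<union> F') ` (V - C) = comps (V - C) F'"
    using component_join(3)[OF T F'] comps_eq[OF F'] by auto
  finally show "comps V (T \<union> F') = insert C (comps (V - C) F')"
    by simp
  show "C \<notin> comps (V - C) F'"
  proof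
    assume "C \<in> comps (V - C) F'"
    then obtain x where "x \<in> V - C" "C = component F' x"
      using comps_eq[OF F'] by blast
    then have "C \<subseteq> V - C"
      using component_subset[OF F'] by blast
    then show False
      using v0 by blast
  qed
qed

lemma forest_join:
  assumes V: "finite V" and v0: "v0 \<in> C" and CV: "C \<subseteq> V"
    and T: "T \<in> forests C 1" and F': "F' \<in> forests (V - C) p"
  shows "T \<union> F' \<in> forests V (Suc p)" "component (T \<union> F') v0 = C"
    "comps V (T \<union> F') = insert C (comps (V - C) F')"
    "{e \<in> T \<union> F'. e \<subseteq> C} = T" "{e \<in> T \<union> F'. \<not> e \<subseteq> C} = F'"
proof -
  have T1: "T \<subseteq> edges_in C" "is_forest T" "card (comps C T) = 1"
    using T by (auto simp: forests_def)
  have F1: "F' \<subseteq> edges_in (V - C)" "is_forest F'" "card (comps (V - C) F') = p"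
    using F' by (auto simp: forests_def)
  note J = comps_join[OF v0 CV T1(1,3) F1(1)]
  show comps: "comps V (T \<union> F') = insert C (comps (V - C) F')"
    by (rule J(1))
  have "T \<union> F' \<subseteq> edges_in V"
    using T1(1) F1(1) edges_in_mono[of C V] edges_in_mono[of "V - C" V] CV by blast
  moreover have "finite (comps (V - C) F')"
    using finite_comps[OF _ F1(1)] V by simp
  ultimately show "T \<union> F' \<in> forests V (Suc p)"
    unfolding forests_def using forest_union[OF component_join(1)[OF T1(1,3) F1(1)] T1(2) F1(2)]
      comps J(2) F1(3) by simp
  show "component (T \<union> F') v0 = C"
    using component_join(2)[OF T1(1,3) F1(1) v0] .
  have "e \<subseteq> C" if "e \<in> T" for e
    using that T1(1) by (auto simp: edges_in_def)
  moreover have "\<not> e \<subseteq> C" if "e \<in> F'" for e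
    using that F1(1) by (auto simp: edges_in_def)
  ultimately show "{e \<in> T \<union> F'. e \<subseteq> C} = T" "{e \<in> T \<union> F'. \<not> e \<subseteq> C} = F'"
    by blast+
qed

lemma component_edges_split:
  assumes F: "F \<subseteq> edges_in V" and C: "C = component F v0"
  shows "{e \<in> F. e \<subseteq> C} \<subseteq> edges_in C" "{e \<in> F. \<not> e \<subseteq> C} \<subseteq> edges_in (V - C)"
proof -
  have closed: "b \<in> C" if "a \<in> C" "{a, b} \<in> F" for a b
    using that reach_edge[OF that(2)] reach_trans unfolding C component_def by blast
  show "{e \<in> F. e \<subseteq> C} \<subseteq> edges_in C"
    using F unfolding edges_in_def by blast
  show "{e \<in> F. \<not> e \<subseteq> C} \<subseteq> edges_in (V - C)"
  proof
    fix e
    assume e: "e \<in> {e \<in> F. \<not> e \<subseteq> C}"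
    then obtain a b where ab: "a \<in> V" "b \<in> V" "a \<noteq> b" "e = {a, b}" "e \<in> F"
      using F unfolding edges_in_def by blast
    have "a \<notin> C" "b \<notin> C"
      using e ab closed[of a b] closed[of b a] by (auto simp: insert_commute)
    then show "e \<in> edges_in (V - C)"
      using ab unfolding edges_in_def by blast
  qed
qed

lemma forest_split:
  assumes V: "finite V" and v0: "v0 \<in> V" and F: "F \<in> forests V (Suc p)"
  defines "C \<equiv> component F v0"
  shows "v0 \<in> C" "C \<subseteq> V" "{e \<in> F. e \<subseteq> C} \<in> forests C 1" "{e \<in> F. \<not> e \<subseteq> C} \<in> forests (V - C) p"
proof -
  have F1: "F \<subseteq> edges_in V" "is_forest F" "card (comps V F) = Suc p"
    using F by (auto simp: forests_def)
  show v0C: "v0 \<in> C"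
    unfolding C_def by (rule component_self)
  show CV: "C \<subseteq> V"
    unfolding C_def using component_subset[OF F1(1) v0] .
  define T where "T = {e \<in> F. e \<subseteq> C}"
  define F' where "F' = {e \<in> F. \<not> e \<subseteq> C}"
  have FU: "F = T \<union> F'"
    unfolding T_def F'_def by blast
  have T: "T \<subseteq> edges_in C" and F': "F' \<subseteq> edges_in (V - C)"
    using component_edges_split[OF F1(1) meta_eq_to_obj_eq[OF C_def]] unfolding T_def F'_def by blast+
  have disj: "\<Union>T \<inter> \<Union>F' = {}"
    using edges_in_Union[OF T] edges_in_Union[OF F'] by blast
  have forests: "is_forest T" "is_forest F'"
    using is_forest_mono[OF F1(2)] FU by blast+
  have "component T x = C" if "x \<in> C" for x
  proof -
    have "x \<notin> \<Union>F'"
      using that edges_in_Union[OF F'] by blast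
    then have "component T x = component F x"
      using component_union_left[OF disj] FU by simp
    also have "\<dots> = C"
      using component_eq[of x F v0] that unfolding C_def by blast
    finally show ?thesis .
  qed
  then have "comps C T = {C}"
    using comps_eq[OF T] v0C by blast
  then have tree: "card (comps C T) = 1"
    by simp
  show "{e \<in> F. e \<subseteq> C} \<in> forests C 1"
    using T forests tree unfolding T_def forests_def by simp
  note J = comps_join[OF v0C CV T tree F']
  have "finite (comps (V - C) F')"
    using finite_comps[OF _ F'] V by simp
  then have "card (comps V F) = Suc (card (comps (V - C) F'))"
    using J(1,2) FU by simp
  then show "{e \<in> F. \<not> e \<subseteq> C} \<in> forests (V - C) p"
    using F' forests F1(3) unfolding F'_def forests_def by simp
qed

lemma forest_join_bij:
  assumes V: "finite V" and v0: "v0 \<in> C" and CV: "C \<subseteq> V"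
  shows "bij_betw (\<lambda>(T, F'). T \<union> F') (forests C 1 \<times> forests (V - C) p)
    {F \<in> forests V (Suc p). component F v0 = C}"
proof (rule bij_betw_byWitness[where f' = "\<lambda>F. ({e \<in> F. e \<subseteq> C}, {e \<in> F. \<not> e \<subseteq> C})"])
  have v0V: "v0 \<in> V"
    using v0 CV by blast
  show "\<forall>TF\<in>forests C 1 \<times> forests (V - C) p.
      (\<lambda>F. ({e \<in> F. e \<subseteq> C}, {e \<in> F. \<not> e \<subseteq> C})) ((\<lambda>(T, F'). T \<union> F') TF) = TF"
    using forest_join(4,5)[OF V v0 CV] by auto
  show "\<forall>F\<in>{F \<in> forests V (Suc p). component F v0 = C}.
      (\<lambda>(T, F'). T \<union> F') ({e \<in> F. e \<subseteq> C}, {e \<in> F. \<not> e \<subseteq> C}) = F"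
    by auto
  show "(\<lambda>(T, F'). T \<union> F') ` (forests C 1 \<times> forests (V - C) p)
      \<subseteq> {F \<in> forests V (Suc p). component F v0 = C}"
    using forest_join(1,2)[OF V v0 CV] by auto
  show "(\<lambda>F. ({e \<in> F. e \<subseteq> C}, {e \<in> F. \<not> e \<subseteq> C})) ` {F \<in> forests V (Suc p). component F v0 = C}
      \<subseteq> forests C 1 \<times> forests (V - C) p"
    using forest_split(3,4)[OF V v0V] by auto
qed

lemma sum_forests_split:
  fixes g :: "nat set set \<Rightarrow> real"
  assumes V: "finite V" and v0: "v0 \<in> V"
  shows "(\<Sum>F\<in>forests V (Suc p). g (comps V F)) =
    (\<Sum>C | v0 \<in> C \<and> C \<subseteq> V. \<Sum>(T, F')\<in>forests C 1 \<times> forests (V - C) p. g (insert C (comps (V - C) F')))"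
proof -
  let ?I = "{C. v0 \<in> C \<and> C \<subseteq> V}"
  have fin: "finite ?I"
    using V by (auto intro: finite_subset[of _ "Pow V"])
  have img: "(\<lambda>F. component F v0) ` forests V (Suc p) \<subseteq> ?I"
  proof
    fix C
    assume "C \<in> (\<lambda>F. component F v0) ` forests V (Suc p)"
    then obtain F where "F \<in> forests V (Suc p)" "C = component F v0"
      by blast
    then show "C \<in> ?I"
      using forest_split(1,2)[OF V v0, of F p] by simp
  qed
  have "(\<Sum>F\<in>forests V (Suc p). g (comps V F))
      = (\<Sum>C\<in>?I. \<Sum>F | F \<in> forests V (Suc p) \<and> component F v0 = C. g (comps V F))"
    using sum.group[OF finite_forests[OF V] fin img, of "\<lambda>F. g (comps V F)"] by simp
  also have "\<dots> = (\<Sum>C\<in>?I. \<Sum>(T, F')\<in>forests C 1 \<times> forests (V - C) p. g (insert C (comps (V - C) F')))"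
  proof (intro sum.cong refl)
    fix C
    assume C: "C \<in> ?I"
    then have v0C: "v0 \<in> C" and CV: "C \<subseteq> V"
      by auto
    have "(\<Sum>F | F \<in> forests V (Suc p) \<and> component F v0 = C. g (comps V F))
        = (\<Sum>(T, F')\<in>forests C 1 \<times> forests (V - C) p. g (comps V (T \<union> F')))"
      using sum.reindex_bij_betw[OF forest_join_bij[OF V v0C CV, of p], of "\<lambda>F. g (comps V F)"]
      by (simp add: case_prod_beta')
    also have "\<dots> = (\<Sum>(T, F')\<in>forests C 1 \<times> forests (V - C) p. g (insert C (comps (V - C) F')))"
    proof (intro sum.cong refl, clarify)
      fix T F'
      assume "T \<in> forests C 1" "F' \<in> forests (V - C) p"
      then show "g (comps V (T \<union> F')) = g (insert C (comps (V - C) F'))"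
        using forest_join(3)[OF V v0C CV] by simp
    qed
    finally show "(\<Sum>F | F \<in> forests V (Suc p) \<and> component F v0 = C. g (comps V F))
        = (\<Sum>(T, F')\<in>forests C 1 \<times> forests (V - C) p. g (insert C (comps (V - C) F')))" .
  qed
  finally show ?thesis
    by simp
qed

section \<open>Cayley's formula\<close>

lemma sum_Pow_card:
  fixes g :: "nat \<Rightarrow> real"
  assumes W: "finite W"
  shows "(\<Sum>S\<in>Pow W. g (card S)) = (\<Sum>k=0..card W. real (card W choose k) * g k)"
proof -
  have "card ` Pow W \<subseteq> {0..card W}"
    using W by (auto intro: card_mono)
  then have "(\<Sum>S\<in>Pow W. g (card S)) = (\<Sum>k=0..card W. \<Sum>S\<in>{S \<in> Pow W. card S = k}. g (card S))"
    using sum.group[of "Pow W" "{0..card W}" card "\<lambda>S. g (card S)"] W by simp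
  also have "\<dots> = (\<Sum>k=0..card W. real (card W choose k) * g k)"
  proof (intro sum.cong refl)
    fix k
    have "{S \<in> Pow W. card S = k} = {S. S \<subseteq> W \<and> card S = k}"
      by auto
    then have "card {S \<in> Pow W. card S = k} = card W choose k"
      using n_subsets[OF W] by simp
    then show "(\<Sum>S\<in>{S \<in> Pow W. card S = k}. g (card S)) = real (card W choose k) * g k"
      by simp
  qed
  finally show ?thesis .
qed

lemma pointed_subsets:
  assumes v0: "v0 \<in> V"
  shows "{C. v0 \<in> C \<and> C \<subseteq> V} = insert v0 ` Pow (V - {v0})" "inj_on (insert v0) (Pow (V - {v0}))"
proof -
  show "{C. v0 \<in> C \<and> C \<subseteq> V} = insert v0 ` Pow (V - {v0})"
  proof
    show "{C. v0 \<in> C \<and> C \<subseteq> V} \<subseteq> insert v0 ` Pow (V - {v0})"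
    proof
      fix C
      assume "C \<in> {C. v0 \<in> C \<and> C \<subseteq> V}"
      then have "C = insert v0 (C - {v0})" "C - {v0} \<in> Pow (V - {v0})"
        by auto
      then show "C \<in> insert v0 ` Pow (V - {v0})"
        by blast
    qed
    show "insert v0 ` Pow (V - {v0}) \<subseteq> {C. v0 \<in> C \<and> C \<subseteq> V}"
      using v0 by auto
  qed
  show "inj_on (insert v0) (Pow (V - {v0}))"
    unfolding inj_on_def by auto
qed

lemma sum_pointed_subsets:
  fixes f :: "nat \<Rightarrow> real"
  assumes V: "finite V" and v0: "v0 \<in> V"
  shows "(\<Sum>C | v0 \<in> C \<and> C \<subseteq> V. f (card C)) =
         (\<Sum>k=1..card V. real ((card V - 1) choose (k - 1)) * f k)"
proof -
  define W where "W = V - {v0}"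
  have W: "finite W" "v0 \<notin> W"
    using V unfolding W_def by auto
  have "card W = card V - 1"
    using V v0 unfolding W_def by simp
  moreover have "card V > 0"
    using V v0 card_gt_0_iff by blast
  ultimately have card_V: "card V = Suc (card W)"
    by simp
  have "(\<Sum>C | v0 \<in> C \<and> C \<subseteq> V. f (card C)) = (\<Sum>S\<in>Pow W. f (card (insert v0 S)))"
    using pointed_subsets[OF v0] sum.reindex[of "insert v0" "Pow W" "\<lambda>C. f (card C)"]
    unfolding W_def by simp
  also have "\<dots> = (\<Sum>S\<in>Pow W. f (Suc (card S)))"
  proof (intro sum.cong refl)
    fix S
    assume "S \<in> Pow W"
    then have "finite S" "v0 \<notin> S"
      using W finite_subset by auto
    then show "f (card (insert v0 S)) = f (Suc (card S))"
      by simp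
  qed
  also have "\<dots> = (\<Sum>k=0..card W. real (card W choose k) * f (Suc k))"
    using sum_Pow_card[OF W(1), of "\<lambda>k. f (Suc k)"] by simp
  also have "\<dots> = (\<Sum>k=1..card V. real ((card V - 1) choose (k - 1)) * f k)"
    unfolding card_V One_nat_def sum.shift_bounds_cl_Suc_ivl by simp
  finally show ?thesis .
qed

lemma card_edge_pairs:
  assumes F: "F \<subseteq> edges_in V" and fin: "finite F"
  shows "card {(a, b). {a, b} \<in> F} = 2 * card F"
proof -
  have eq: "{(a, b). {a, b} \<in> F} = (\<Union>e\<in>F. {(a, b). {a, b} = e})"
    by blast
  have two: "card {(a, b). {a, b} = e} = 2" if "e \<in> F" for e
  proof -
    have "e \<in> edges_in V"
      using that F by blast
    then obtain x y where xy: "x \<noteq> y" "e = {x, y}"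
      unfolding edges_in_def by blast
    have "{(a, b). {a, b} = e} = {(x, y), (y, x)}"
      using xy by (auto simp: doubleton_eq_iff)
    then show ?thesis using xy by simp
  qed
  have fe: "finite {(a, b). {a, b} = e}" if "e \<in> F" for e
    using two[OF that] by (intro card_ge_0_finite) simp
  have "card (\<Union>e\<in>F. {(a, b). {a, b} = e}) = (\<Sum>e\<in>F. card {(a, b). {a, b} = e})"
  proof (rule card_UN_disjoint[OF fin])
    show "\<forall>i\<in>F. finite {(a, b). {a, b} = i}"
      using fe by blast
    show "\<forall>i\<in>F. \<forall>j\<in>F. i \<noteq> j \<longrightarrow> {(a, b). {a, b} = i} \<inter> {(a, b). {a, b} = j} = {}"
      by blast
  qed
  also have "\<dots> = (\<Sum>e\<in>F. 2)"
    using two by simp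
  finally show ?thesis unfolding eq by simp
qed

definition cross_pairs :: "nat set set \<Rightarrow> nat" where
  "cross_pairs P = card {(a, b). a \<in> \<Union>P \<and> b \<in> \<Union>P \<and> \<not> (\<exists>D\<in>P. a \<in> D \<and> b \<in> D)}"

lemma cross_pairs_two:
  assumes "finite C" "finite D" "C \<inter> D = {}"
  shows "cross_pairs {C, D} = 2 * card C * card D"
proof -
  have "{(a, b). a \<in> \<Union>{C, D} \<and> b \<in> \<Union>{C, D} \<and> \<not> (\<exists>E\<in>{C, D}. a \<in> E \<and> b \<in> E)} = C \<times> D \<union> D \<times> C"
    using assms(3) by auto
  moreover have "card (C \<times> D \<union> D \<times> C) = card C * card D + card D * card C"
    using assms by (subst card_Un_disjoint) (auto simp: card_cartesian_product)
  ultimately show ?thesis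
    unfolding cross_pairs_def by simp
qed

lemma disconnected_pairs_cross_pairs:
  assumes F: "F \<subseteq> edges_in V"
  shows "card {(a, b). a \<in> V \<and> b \<in> V \<and> (a, b) \<notin> reach F} = cross_pairs (comps V F)"
proof -
  have union: "\<Union>(comps V F) = V"
    unfolding comps_eq[OF F] using component_subset[OF F] component_self by blast
  have "(\<exists>D\<in>comps V F. a \<in> D \<and> b \<in> D) \<longleftrightarrow> (a, b) \<in> reach F" if "a \<in> V" for a b
    unfolding comps_eq[OF F] component_def using that reach_sym reach_trans by blast
  then show ?thesis
    unfolding cross_pairs_def union by (intro arg_cong[where f = card]) auto
qed

text \<open>A tree with a marked oriented edge \<open>(a, b)\<close> is the same as a
  two-component forest together with an ordered pair \<open>(a, b)\<close> in different
  components: delete, respectively add, the edge \<open>{a, b}\<close>.\<close>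

definition marked_trees :: "nat set \<Rightarrow> (nat set set \<times> nat \<times> nat) set" where
  "marked_trees V = Sigma (forests V 1) (\<lambda>T. {(a, b). {a, b} \<in> T})"

definition marked_two_forests :: "nat set \<Rightarrow> (nat set set \<times> nat \<times> nat) set" where
  "marked_two_forests V = Sigma (forests V 2) (\<lambda>F. {(a, b). a \<in> V \<and> b \<in> V \<and> (a, b) \<notin> reach F})"

lemma card_marked_trees:
  assumes V: "finite V" and n: "card V = n" "n \<ge> 1"
  shows "card (marked_trees V) = card (forests V 1) * (2 * (n - 1))"
proof -
  have pairs: "card {(a, b). {a, b} \<in> T} = 2 * (n - 1)" if "T \<in> forests V 1" for T
  proof -
    have T: "T \<subseteq> edges_in V" "is_forest T" "card (comps V T) = 1"
      using that by (auto simp: forests_def)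
    have "card T + 1 = n"
      using forest_edges_plus_comps[OF V T(1,2)] T(3) n by simp
    then show ?thesis
      using card_edge_pairs[OF T(1) finite_subset[OF T(1) finite_edges_in[OF V]]] by simp
  qed
  have "finite {(a, b). {a, b} \<in> T}" if "T \<in> forests V 1" for T
    by (rule finite_subset[of _ "V \<times> V"]) (use that V in \<open>auto simp: forests_def edges_in_def doubleton_eq_iff\<close>)
  then show ?thesis
    unfolding marked_trees_def using finite_forests[OF V] pairs by (simp add: card_SigmaI)
qed

lemma tree_delete_edge:
  assumes V: "finite V" and T: "T \<in> forests V 1" and ab: "{a, b} \<in> T"
  shows "T - {{a, b}} \<in> forests V 2" "(a, b) \<notin> reach (T - {{a, b}})" "a \<in> V" "b \<in> V"
proof -
  have T1: "T \<subseteq> edges_in V" "is_forest T" "card (comps V T) = 1"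
    using T by (auto simp: forests_def)
  show ab_V: "a \<in> V" "b \<in> V"
    using T1(1) ab unfolding edges_in_def by (auto simp: doubleton_eq_iff)
  have F: "T - {{a, b}} \<subseteq> edges_in V" "is_forest (T - {{a, b}})"
    using T1 is_forest_mono by auto
  show bridge: "(a, b) \<notin> reach (T - {{a, b}})"
    using forest_edge_bridge[OF T1(2) ab] .
  have "insert {a, b} (T - {{a, b}}) = T"
    using ab by blast
  then have "card (comps V (T - {{a, b}})) = 2"
    using card_comps_insert_bridge[OF V F(1) ab_V bridge] T1(3) by simp
  then show "T - {{a, b}} \<in> forests V 2"
    using F unfolding forests_def by simp
qed

lemma two_forest_insert_bridge:
  assumes V: "finite V" and F: "F \<in> forests V 2" and ab: "a \<in> V" "b \<in> V"
    and bridge: "(a, b) \<notin> reach F"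
  shows "insert {a, b} F \<in> forests V 1"
proof -
  have F1: "F \<subseteq> edges_in V" "is_forest F" "card (comps V F) = 2"
    using F by (auto simp: forests_def)
  have "a \<noteq> b"
    using bridge by blast
  then have "insert {a, b} F \<subseteq> edges_in V"
    using F1(1) ab unfolding edges_in_def by blast
  moreover have "card (comps V (insert {a, b} F)) = 1"
    using card_comps_insert_bridge[OF V F1(1) ab bridge] F1(3) by simp
  ultimately show ?thesis
    using forest_insert[OF F1(2) bridge] unfolding forests_def by simp
qed

lemma card_marked_trees_eq:
  assumes V: "finite V"
  shows "card (marked_trees V) = card (marked_two_forests V)"
proof (rule bij_betw_same_card[of "\<lambda>(T, a, b). (T - {{a, b}}, a, b)"],
    rule bij_betw_byWitness[where f' = "\<lambda>(F, a, b). (insert {a, b} F, a, b)"])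
  show "\<forall>x\<in>marked_trees V. (\<lambda>(F, a, b). (insert {a, b} F, a, b)) ((\<lambda>(T, a, b). (T - {{a, b}}, a, b)) x) = x"
    by (auto simp: marked_trees_def)
  show "\<forall>y\<in>marked_two_forests V. (\<lambda>(T, a, b). (T - {{a, b}}, a, b)) ((\<lambda>(F, a, b). (insert {a, b} F, a, b)) y) = y"
    by (auto simp: marked_two_forests_def dest: reach_edge)
  show "(\<lambda>(T, a, b). (T - {{a, b}}, a, b)) ` marked_trees V \<subseteq> marked_two_forests V"
    using tree_delete_edge[OF V] by (auto simp: marked_trees_def marked_two_forests_def)
  show "(\<lambda>(F, a, b). (insert {a, b} F, a, b)) ` marked_two_forests V \<subseteq> marked_trees V"
    using two_forest_insert_bridge[OF V] by (auto simp: marked_trees_def marked_two_forests_def)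
qed

text \<open>Counting two-component forests with a cross pair by the component \<open>C\<close> of a
  fixed vertex: such a forest is a tree on \<open>C\<close> and a tree on \<open>V - C\<close>, with
  \<open>2 |C| |V - C|\<close> cross pairs.\<close>

lemma card_marked_two_forests:
  assumes V: "finite V" and v0: "v0 \<in> V"
  shows "real (card (marked_two_forests V)) = (\<Sum>C | v0 \<in> C \<and> C \<subseteq> V.
    real (card (forests C 1)) * real (card (forests (V - C) 1)) * (2 * real (card C) * real (card (V - C))))"
proof -
  have "card (marked_two_forests V)
      = (\<Sum>F\<in>forests V 2. card {(a, b). a \<in> V \<and> b \<in> V \<and> (a, b) \<notin> reach F})"
    unfolding marked_two_forests_def using finite_forests[OF V] V
    by (intro card_SigmaI) (auto intro: finite_subset[of _ "V \<times> V"])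
  also have "\<dots> = (\<Sum>F\<in>forests V 2. cross_pairs (comps V F))"
    by (intro sum.cong refl) (simp add: disconnected_pairs_cross_pairs forests_def)
  finally have "real (card (marked_two_forests V)) = (\<Sum>F\<in>forests V (Suc 1). real (cross_pairs (comps V F)))"
    by (simp add: numeral_2_eq_2)
  also have "\<dots> = (\<Sum>C | v0 \<in> C \<and> C \<subseteq> V. \<Sum>(T, F')\<in>forests C 1 \<times> forests (V - C) 1.
      real (cross_pairs (insert C (comps (V - C) F'))))"
    by (rule sum_forests_split[OF V v0])
  also have "\<dots> = (\<Sum>C | v0 \<in> C \<and> C \<subseteq> V.
      real (card (forests C 1)) * real (card (forests (V - C) 1)) * (2 * real (card C) * real (card (V - C))))"
  proof (intro sum.cong refl)
    fix C
    assume C: "C \<in> {C. v0 \<in> C \<and> C \<subseteq> V}"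
    have "real (cross_pairs (insert C (comps (V - C) F'))) = 2 * real (card C) * real (card (V - C))"
      if "F' \<in> forests (V - C) 1" for F'
    proof -
      have "comps (V - C) F' = {V - C}"
        using that comps_connected by (auto simp: forests_def)
      moreover have "finite C"
        using C V finite_subset by auto
      ultimately show ?thesis
        using cross_pairs_two[of C "V - C"] V by simp
    qed
    then show "(\<Sum>(T, F')\<in>forests C 1 \<times> forests (V - C) 1. real (cross_pairs (insert C (comps (V - C) F'))))
        = real (card (forests C 1)) * real (card (forests (V - C) 1)) * (2 * real (card C) * real (card (V - C)))"
      by (simp add: sum.cartesian_product[symmetric] card_cartesian_product)
  qed
  finally show ?thesis .
qed

text \<open>The induction step of Cayley's formula: if Cayley's formula holds for all proper
  nonempty subsets of \<open>V\<close>, the count of marked two-component forests is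
  \<open>\<Sum>\<^sub>k (n-1 choose k-1) k\<^bsup>k-2\<^esup> (n-k)\<^bsup>n-k-2\<^esup> 2 k (n-k) = 2 (n-1) n\<^bsup>n-2\<^esup>\<close> by the
  convolution identity for \<open>R\<close>.\<close>

lemma card_marked_two_forests_cayley:
  assumes V: "finite V" and v0: "v0 \<in> V" and n: "card V = n" "n \<ge> 2"
    and smaller: "\<And>W. W \<subset> V \<Longrightarrow> W \<noteq> {} \<Longrightarrow> real (card (forests W 1)) = real (card W) ^ (card W - 2)"
  shows "real (card (marked_two_forests V)) = real n ^ (n - 2) * (2 * real (n - 1))"
proof -
  define tree_pairs where
    "tree_pairs = (\<lambda>k. real k ^ (k - 2) * real (n - k) ^ (n - k - 2) * (2 * real k * real (n - k)))"
  have "real (card (marked_two_forests V)) = (\<Sum>C | v0 \<in> C \<and> C \<subseteq> V. tree_pairs (card C))"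
    unfolding card_marked_two_forests[OF V v0]
  proof (intro sum.cong refl)
    fix C
    assume C: "C \<in> {C. v0 \<in> C \<and> C \<subseteq> V}"
    have fin: "finite C"
      using C V finite_subset by auto
    have card_rest: "card (V - C) = n - card C"
      using C V n by (simp add: card_Diff_subset fin)
    show "real (card (forests C 1)) * real (card (forests (V - C) 1))
        * (2 * real (card C) * real (card (V - C))) = tree_pairs (card C)"
    proof (cases "C = V")
      case True
      then show ?thesis
        using n by (simp add: tree_pairs_def)
    next
      case False
      then have "C \<subset> V" "C \<noteq> {}" "V - C \<subset> V" "V - C \<noteq> {}"
        using C by auto
      then show ?thesis
        using smaller[of C] smaller[of "V - C"] card_rest by (simp add: tree_pairs_def)
    qed
  qed
  also have "\<dots> = (\<Sum>k=1..n. real ((n - 1) choose (k - 1)) * tree_pairs k)"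
    using sum_pointed_subsets[OF V v0, of tree_pairs] n by simp
  also have "\<dots> = 2 * (\<Sum>k=1..n. real ((n - 1) choose (k - 1)) * (fact k * rooted_trees_egf $ k)
      * (fact (n - k) * rooted_trees_egf $ (n - k)))"
    unfolding sum_distrib_left tree_pairs_def by (intro sum.cong refl) (simp add: rooted_trees_egf_nth)
  also have "\<dots> = real n ^ (n - 2) * (2 * real (n - 1))"
    using rooted_trees_egf_convolution[OF n(2)] by simp
  finally show ?thesis .
qed

text \<open>By induction over proper subsets, comparing the two counts of the double
  counting argument.\<close>

theorem cayley:
  assumes "finite V" "V \<noteq> {}"
  shows "real (card (forests V 1)) = real (card V) ^ (card V - 2)"
  using assms
proof (induction V rule: finite_psubset_induct)
  case (psubset V)
  show ?case
  proof (cases "card V = 1")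
    case True
    then obtain v where v: "V = {v}"
      using card_1_singletonE by blast
    have "edges_in {v} = {}"
      by (auto simp: edges_in_def)
    then have "forests V 1 = {{}}"
      unfolding v forests_def by (auto simp: comps_empty is_forest_empty)
    then show ?thesis
      using True by simp
  next
    case False
    moreover have "card V > 0"
      using psubset.hyps psubset.prems by (simp add: card_gt_0_iff)
    ultimately have n: "card V \<ge> 2"
      by simp
    obtain v0 where v0: "v0 \<in> V"
      using psubset.prems by blast
    have smaller: "real (card (forests W 1)) = real (card W) ^ (card W - 2)"
      if "W \<subset> V" "W \<noteq> {}" for W
      using psubset.IH that psubset.hyps finite_subset by blast
    have "real (card (forests V 1)) * (2 * real (card V - 1))
        = real (card V) ^ (card V - 2) * (2 * real (card V - 1))"
      using card_marked_trees[OF psubset.hyps refl] card_marked_trees_eq[OF psubset.hyps]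
        card_marked_two_forests_cayley[OF psubset.hyps v0 refl n smaller] n by simp
    moreover have "2 * real (card V - 1) \<noteq> 0"
      using n by simp
    ultimately show ?thesis
      by simp
  qed
qed

section \<open>Counting spanning forests\<close>

lemma forests_empty: "forests {} p = (if p = 0 then {{}} else {})"
proof -
  have "edges_in {} = {}"
    by (simp add: edges_in_def)
  moreover have "comps {} {} = {}"
    by (simp add: comps_empty)
  ultimately show ?thesis
    by (auto simp: forests_def is_forest_empty)
qed

lemma forests_zero:
  assumes "finite V" "V \<noteq> {}"
  shows "forests V 0 = {}"
proof -
  have "card (comps V F) \<noteq> 0" if "F \<subseteq> edges_in V" for F
    using comps_eq[OF that] assms finite_comps[OF assms(1) that] by auto
  then show ?thesis
    unfolding forests_def by auto
qed

text \<open>The induction step for the forest count: a \<open>(q+1)\<close>-component forest is a tree on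
  the component \<open>C\<close> of \<open>v\<^sub>0\<close> (counted by Cayley's formula) and a \<open>q\<close>-component forest on
  \<open>V - C\<close>; this is the recurrence satisfied by the coefficients of \<open>T\<^sup>q/q!\<close>.\<close>

lemma card_forests_Suc:
  assumes V: "finite V" and v0: "v0 \<in> V"
    and smaller: "\<And>W. W \<subset> V \<Longrightarrow> real (card (forests W q)) = fact (card W) / fact q * (trees_egf ^ q) $ card W"
  shows "real (card (forests V (Suc q))) = fact (card V) / fact (Suc q) * (trees_egf ^ Suc q) $ card V"
proof -
  define n where "n = card V"
  have n: "n \<ge> 1"
    using V v0 by (auto simp: n_def Suc_le_eq card_gt_0_iff)
  define count where
    "count = (\<lambda>k. real k ^ (k - 2) * (fact (n - k) / fact q * (trees_egf ^ q) $ (n - k)))"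
  have "real (card (forests V (Suc q)))
      = (\<Sum>C | v0 \<in> C \<and> C \<subseteq> V. \<Sum>(T, F')\<in>forests C 1 \<times> forests (V - C) q. 1::real)"
    using sum_forests_split[OF V v0, of "\<lambda>_. 1" q] by (simp add: case_prod_beta')
  also have "\<dots> = (\<Sum>C | v0 \<in> C \<and> C \<subseteq> V. count (card C))"
  proof (intro sum.cong refl)
    fix C
    assume C: "C \<in> {C. v0 \<in> C \<and> C \<subseteq> V}"
    have fin: "finite C" and "C \<noteq> {}" "V - C \<subset> V"
      using C V finite_subset by auto
    moreover have "card (V - C) = n - card C"
      using C V by (simp add: n_def card_Diff_subset fin)
    ultimately show "(\<Sum>(T, F')\<in>forests C 1 \<times> forests (V - C) q. 1::real) = count (card C)"
      using cayley[of C] smaller[of "V - C"] by (simp add: count_def card_cartesian_product)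
  qed
  also have "\<dots> = (\<Sum>k=1..n. real ((n - 1) choose (k - 1)) * count k)"
    using sum_pointed_subsets[OF V v0, of count] by (simp add: n_def)
  also have "\<dots> = (\<Sum>k=1..n. real ((n - 1) choose (k - 1)) * (fact k * trees_egf $ k)
      * (fact (n - k) / fact q * (trees_egf ^ q) $ (n - k)))"
    unfolding count_def by (intro sum.cong refl) (simp add: trees_egf_nth)
  also have "\<dots> = fact n / fact (Suc q) * (trees_egf ^ Suc q) $ n"
    using trees_egf_power_recurrence[OF n] by simp
  finally show ?thesis
    by (simp add: n_def)
qed

theorem card_forests:
  assumes "finite V"
  shows "real (card (forests V p)) = fact (card V) / fact p * (trees_egf ^ p) $ card V"
  using assms
proof (induction V arbitrary: p rule: finite_psubset_induct)
  case (psubset V)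
  show ?case
  proof (cases "V = {}")
    case True
    then show ?thesis
      by (cases p) (simp_all add: forests_empty)
  next
    case False
    then obtain v0 where v0: "v0 \<in> V"
      by blast
    show ?thesis
    proof (cases p)
      case 0
      have "forests V 0 = {}"
        using forests_zero[OF psubset.hyps False] .
      then show ?thesis
        using 0 False psubset.hyps by simp
    next
      case (Suc q)
      then show ?thesis
        using card_forests_Suc[OF psubset.hyps v0] psubset.IH by simp
    qed
  qed
qed

text \<open>The main theorem: the coefficient formula is the explicit form of \<open>n!/p! [z\<^sup>n] T\<^sup>p\<close>,
  and the generating polynomial is \<open>n! [z\<^sup>n] \<Sum>\<^sub>p \<lambda>\<^sup>p T\<^sup>p/p! = n! [z\<^sup>n] exp(\<lambda> T)\<close>.\<close>

theorem mainTheorem13: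
  fixes n :: nat and lambda :: real
  assumes "n \<ge> 1" and "lambda > 0"
  shows "(\<Sum>p\<le>n. real (u_e2 n p) * lambda ^ p) =
           sqrt lambda ^ n *
             (hermiteHe n (sqrt lambda + real n / sqrt lambda)
              - real n / sqrt lambda * hermiteHe (n - 1) (sqrt lambda + real n / sqrt lambda))
         \<and> (\<forall>p. real (u_e2 n p) =
              (1 / fact p) * (\<Sum>q\<le>p. (- 1 / 2) ^ q * real (p choose q)
                 * real (if p + q = 0 then 0 else (n - 1) choose (p + q - 1))
                 * real n ^ (n - p - q) * fact (p + q)))"
proof -
  have u: "real (u_e2 n p) = fact n / fact p * (trees_egf ^ p) $ n" for p
    using card_forests[of "{0..<n}" p] by (simp add: u_e2_forests)
  have "(\<Sum>p\<le>n. real (u_e2 n p) * lambda ^ p) = fact n * (fps_exp lambda oo trees_egf) $ n"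
    unfolding fps_compose_nth u atMost_atLeast0 sum_distrib_left
    by (intro sum.cong refl) simp
  also have "\<dots> = sqrt lambda ^ n *
             (hermiteHe n (sqrt lambda + real n / sqrt lambda)
              - real n / sqrt lambda * hermiteHe (n - 1) (sqrt lambda + real n / sqrt lambda))"
    by (rule exp_trees_egf_hermite[OF assms])
  finally show ?thesis
    using u trees_egf_power_coeff[OF assms(1)] by simp
qed

end
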